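(* Let $p$ be a prime, $a\in\mathbb{N}$, and put $\nu_p=1$ if $p=2$ and $\nu_p=0$ if $p>2$. Let $\mathbf{u}\in(\mathbb{Z}/p^a\mathbb{Z})^4$ with $p\nmid\mathbf{u}$ and $Q_1(\mathbf{u})\equiv Q_2(\mathbf{u})\equiv0\bmod p^a$. Then for every integer $b>a$, $$\#\big\{\mathbf{v}\in(\mathbb{Z}/p^b\mathbb{Z})^4:\ Q_1(\mathbf{v})\equiv Q_2(\mathbf{v})\equiv0\bmod p^b,\ \mathbf{v}\equiv\mathbf{u}\bmod p^a\big\}\le\begin{cases}p^{2(b-a)}&\text{if }p\nmid\Delta,\\ p^{2\nu_p+3(b-a)}&\text{if }p\mid\Delta.\end{cases}$$
   Context: $L_i(x_1,x_2)=a_ix_1+b_ix_2\in\mathbb{Z}[x_1,x_2]$ ($1\le i\le4$) with $\gcd(a_i,b_i)=1$ and pairwise non-proportional; $Q_1(\mathbf{y})=\sum_{i=1}^4a_iy_i^2$, $Q_2(\mathbf{y})=-\sum_{i=1}^4b_iy_i^2$. $\Delta=\prod_{p\in\mathcal{P}}p$ where $\mathcal{P}=\{2\}\cup\{p\text{ prime}: p\mid a_ib_j-a_jb_i\text{ for some }i\ne j\}$. $p\nmid\mathbf{u}$ means not all coordinates of $\mathbf{u}$ are divisible by $p$. *)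

theory Defs
  imports "HOL-Computational_Algebra.Primes" "HOL-Number_Theory.Cong"
begin

text \<open>Linear forms L_i = a_i x_1 + b_i x_2 for i in {1..4}, coefficients given as
  functions a, b :: nat => int on the index set {1..4}.\<close>

definition Q1 :: "(nat \<Rightarrow> int) \<Rightarrow> (nat \<Rightarrow> int) \<Rightarrow> int" where
  "Q1 a y = (\<Sum>i\<in>{1..4}. a i * (y i)^2)"

definition Q2 :: "(nat \<Rightarrow> int) \<Rightarrow> (nat \<Rightarrow> int) \<Rightarrow> int" where
  "Q2 b y = - (\<Sum>i\<in>{1..4}. b i * (y i)^2)"

definition bad_primes :: "(nat \<Rightarrow> int) \<Rightarrow> (nat \<Rightarrow> int) \<Rightarrow> int set" where
  "bad_primes a b = {p. prime p \<and> (p = 2 \<or>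
      (\<exists>i\<in>{1..4}. \<exists>j\<in>{1..4}. i \<noteq> j \<and> p dvd (a i * b j - a j * b i)))}"

definition Delta :: "(nat \<Rightarrow> int) \<Rightarrow> (nat \<Rightarrow> int) \<Rightarrow> int" where
  "Delta a b = (\<Prod>p\<in>bad_primes a b. p)"

definition nu :: "int \<Rightarrow> nat" where
  "nu p = (if p = 2 then 1 else 0)"

text \<open>Vectors in (Z/p^b Z)^4 represented by their canonical representatives in
  {0..<p^b}, indexed by {1..4}, extended by 0 outside.\<close>
definition lifts :: "(nat \<Rightarrow> int) \<Rightarrow> (nat \<Rightarrow> int) \<Rightarrow> int \<Rightarrow> nat \<Rightarrow> nat \<Rightarrow> (nat \<Rightarrow> int) \<Rightarrow> (nat \<Rightarrow> int) set" where
  "lifts a b p e f u = {v. (\<forall>i\<in>{1..4}. 0 \<le> v i \<and> v i < p ^ f) \<and> (\<forall>i. i \<notin> {1..4} \<longrightarrow> v i = 0)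
      \<and> [Q1 a v = 0] (mod p ^ f) \<and> [Q2 b v = 0] (mod p ^ f)
      \<and> (\<forall>i\<in>{1..4}. [v i = u i] (mod p ^ e))}"

end

theory Submission
  imports Defs "HOL-Library.FuncSet"
begin

text \<open>Write a solution modulo \<open>p\<^sup>k\<^sup>+\<^sup>1\<close> as \<open>w + p\<^sup>k t\<close>, with \<open>w\<close> its residue modulo \<open>p\<^sup>k\<close> and \<open>t\<close>
  a vector of \<open>p\<close>-adic digits. Expanding the diagonal forms, the conditions on \<open>t\<close> become the linear
  congruences \<open>Q\<^sub>1(w)/p\<^sup>k + 2 \<Sum> a\<^sub>i w\<^sub>i t\<^sub>i \<equiv> 0\<close> and \<open>Q\<^sub>2(w)/p\<^sup>k - 2 \<Sum> b\<^sub>i w\<^sub>i t\<^sub>i \<equiv> 0 (mod p)\<close>.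
  Since \<open>p\<close> does not divide \<open>u\<close>, some \<open>w\<^sub>i\<close> is a unit, and as \<open>gcd(a\<^sub>i, b\<^sub>i) = 1\<close> one of the congruences has a
  unit coefficient: each solution modulo \<open>p\<^sup>k\<close> has at most \<open>p\<^sup>3\<close> lifts. If \<open>p\<close> does not divide \<open>\<Delta>\<close>, the two
  equations modulo \<open>p\<close> force a second unit coordinate \<open>w\<^sub>j\<close>, and the minor
  \<open>4 w\<^sub>i w\<^sub>j (a\<^sub>i b\<^sub>j - a\<^sub>j b\<^sub>i)\<close> is a unit, leaving at most \<open>p\<^sup>2\<close> lifts. For \<open>p = 2\<close> the
  factor 2 in the cross terms is lost, so one counts residues modulo \<open>2\<^sup>k\<close> of solutions modulo
  \<open>2\<^sup>k\<^sup>+\<^sup>1\<close> instead; the steps where this bookkeeping starts and ends cost the factor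
  \<open>2\<^sup>2\<^sup>\<nu>\<close>.\<close>

definition box :: "'a set \<Rightarrow> int \<Rightarrow> ('a \<Rightarrow> int) set" where
  "box I m = {t. (\<forall>i\<in>I. 0 \<le> t i \<and> t i < m) \<and> (\<forall>i. i \<notin> I \<longrightarrow> t i = 0)}"

lemma box_eq_image: "box I m = (\<lambda>g i. if i \<in> I then g i else 0) ` PiE I (\<lambda>_. {0..<m})"
proof
  show "box I m \<subseteq> (\<lambda>g i. if i \<in> I then g i else 0) ` PiE I (\<lambda>_. {0..<m})"
  proof
    fix t assume t: "t \<in> box I m"
    then have "t = (\<lambda>i. if i \<in> I then restrict t I i else 0)" unfolding box_def by auto
    moreover have "restrict t I \<in> PiE I (\<lambda>_. {0..<m})" using t unfolding box_def by auto
    ultimately show "t \<in> (\<lambda>g i. if i \<in> I then g i else 0) ` PiE I (\<lambda>_. {0..<m})" by blast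
  qed
qed (auto simp: box_def)

lemma finite_box: "finite I \<Longrightarrow> finite (box I m)"
  unfolding box_eq_image by (intro finite_imageI finite_PiE) auto

lemma card_box_le:
  assumes "finite I" "0 \<le> m"
  shows "int (card (box I m)) \<le> m ^ card I"
proof -
  have "card (box I m) \<le> card (PiE I (\<lambda>_. {0..<m}))"
    unfolding box_eq_image using assms by (intro card_image_le finite_PiE) auto
  also have "\<dots> = nat m ^ card I" using assms by (simp add: card_PiE)
  finally have "int (card (box I m)) \<le> int (nat m ^ card I)" by (simp only: of_nat_le_iff)
  then show ?thesis using assms by simp
qed

lemma card_box_subset_le_if_determined:
  assumes I: "finite I" and J: "J \<subseteq> I" and S: "S \<subseteq> box I m" and m: "0 \<le> m"
    and determined: "\<And>t t'. t \<in> S \<Longrightarrow> t' \<in> S \<Longrightarrow> \<forall>i\<in>I - J. t i = t' i \<Longrightarrow> \<forall>i\<in>J. t i = t' i"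
  shows "int (card S) \<le> m ^ (card I - card J)"
proof -
  let ?forget = "\<lambda>t i. if i \<in> J then 0 else t i"
  have "inj_on ?forget S"
  proof (rule inj_onI)
    fix t t' assume t: "t \<in> S" and t': "t' \<in> S" and eq: "?forget t = ?forget t'"
    have off: "t i = t' i" if "i \<notin> J" for i using fun_cong[OF eq, of i] that by simp
    then have "\<forall>i\<in>J. t i = t' i" using determined[OF t t'] by blast
    with off show "t = t'" by (intro ext) metis
  qed
  moreover have "?forget ` S \<subseteq> box (I - J) m" using S unfolding box_def by auto
  ultimately have "card S \<le> card (box (I - J) m)"
    using I by (intro card_inj_on_le finite_box) auto
  then have "int (card S) \<le> int (card (box (I - J) m))" by simp
  also have "\<dots> \<le> m ^ card (I - J)" using I m by (intro card_box_le) auto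
  also have "card (I - J) = card I - card J" using I J by (simp add: card_Diff_subset finite_subset)
  finally show ?thesis .
qed

lemma sum_mult_diff_eq_if_agree:
  assumes "finite I" "J \<subseteq> I" "\<forall>i\<in>I - J. t i = t' i"
  shows "(\<Sum>i\<in>I. c i * t i) - (\<Sum>i\<in>I. c i * t' i) = (\<Sum>i\<in>J. c i * (t i - t' i :: int))"
proof -
  have "(\<Sum>i\<in>I. c i * t i) - (\<Sum>i\<in>I. c i * t' i) = (\<Sum>i\<in>I. c i * (t i - t' i))"
    by (simp add: sum_subtractf right_diff_distrib)
  also have "\<dots> = (\<Sum>i\<in>J. c i * (t i - t' i))"
    using assms by (intro sum.mono_neutral_right) auto
  finally show ?thesis .
qed

lemma eq_if_dvd_diff_box:
  assumes "t \<in> box I p" "t' \<in> box I p" "i \<in> I" "p dvd t i - t' i"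
  shows "t i = t' i"
  using assms by (intro cong_less_imp_eq_int) (auto simp: box_def cong_iff_dvd_diff)

lemma card_box_linear_congruence_le:
  fixes p r :: int and c :: "'a \<Rightarrow> int"
  assumes p: "prime p" and I: "finite I" and j: "j \<in> I" and cj: "\<not> p dvd c j"
  shows "int (card {t \<in> box I p. p dvd r + (\<Sum>i\<in>I. c i * t i)}) \<le> p ^ (card I - 1)"
proof -
  let ?S = "{t \<in> box I p. p dvd r + (\<Sum>i\<in>I. c i * t i)}"
  have "int (card ?S) \<le> p ^ (card I - card {j})"
  proof (rule card_box_subset_le_if_determined[OF I])
    fix t t' assume t: "t \<in> ?S" and t': "t' \<in> ?S" and agree: "\<forall>i\<in>I - {j}. t i = t' i"
    have "(r + (\<Sum>i\<in>I. c i * t i)) - (r + (\<Sum>i\<in>I. c i * t' i)) = c j * (t j - t' j)"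
      using sum_mult_diff_eq_if_agree[OF I _ agree, of c] j by simp
    moreover have "p dvd (r + (\<Sum>i\<in>I. c i * t i)) - (r + (\<Sum>i\<in>I. c i * t' i))"
      using t t' by (intro dvd_diff) simp_all
    ultimately have "p dvd c j * (t j - t' j)" by simp
    then have "p dvd t j - t' j" using p cj by (simp add: prime_dvd_mult_iff)
    with t t' j have "t j = t' j" by (intro eq_if_dvd_diff_box) simp_all
    then show "\<forall>i\<in>{j}. t i = t' i" by simp
  next
    show "{j} \<subseteq> I" "?S \<subseteq> box I p" "0 \<le> p" using j p by (auto simp: prime_ge_0_int)
  qed
  then show ?thesis by simp
qed

lemma prime_dvd_solution_of_linear_system:
  fixes p a b c d x y :: int
  assumes p: "prime p" and det: "\<not> p dvd a * d - b * c"
    and "p dvd a * x + b * y" "p dvd c * x + d * y"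
  shows "p dvd x \<and> p dvd y"
proof -
  have "(a * d - b * c) * x = d * (a * x + b * y) - b * (c * x + d * y)"
    "(a * d - b * c) * y = a * (c * x + d * y) - c * (a * x + b * y)"
    by (simp_all add: algebra_simps)
  then have "p dvd (a * d - b * c) * x" "p dvd (a * d - b * c) * y"
    using assms(3,4) by (metis dvd_diff dvd_mult)+
  then show ?thesis using p det prime_dvd_mult_iff by blast
qed

lemma card_box_linear_congruences_le:
  fixes p r r' :: int and c d :: "'a \<Rightarrow> int"
  assumes p: "prime p" and I: "finite I" and ij: "i \<in> I" "j \<in> I" "i \<noteq> j"
    and minor: "\<not> p dvd c i * d j - c j * d i"
  shows "int (card {t \<in> box I p. p dvd r + (\<Sum>k\<in>I. c k * t k) \<and> p dvd r' + (\<Sum>k\<in>I. d k * t k)})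
    \<le> p ^ (card I - 2)"
proof -
  let ?S = "{t \<in> box I p. p dvd r + (\<Sum>k\<in>I. c k * t k) \<and> p dvd r' + (\<Sum>k\<in>I. d k * t k)}"
  have "int (card ?S) \<le> p ^ (card I - card {i, j})"
  proof (rule card_box_subset_le_if_determined[OF I])
    fix t t' assume t: "t \<in> ?S" and t': "t' \<in> ?S" and agree: "\<forall>k\<in>I - {i, j}. t k = t' k"
    have diff: "(q + (\<Sum>k\<in>I. g k * t k)) - (q + (\<Sum>k\<in>I. g k * t' k)) = g i * (t i - t' i) + g j * (t j - t' j)"
      for q and g :: "'a \<Rightarrow> int"
      using sum_mult_diff_eq_if_agree[OF I _ agree, of g] ij by simp
    have "p dvd (r + (\<Sum>k\<in>I. c k * t k)) - (r + (\<Sum>k\<in>I. c k * t' k))"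
      "p dvd (r' + (\<Sum>k\<in>I. d k * t k)) - (r' + (\<Sum>k\<in>I. d k * t' k))"
      using t t' by (intro dvd_diff; simp)+
    then have "p dvd c i * (t i - t' i) + c j * (t j - t' j)" "p dvd d i * (t i - t' i) + d j * (t j - t' j)"
      unfolding diff .
    then have "p dvd t i - t' i" "p dvd t j - t' j"
      using prime_dvd_solution_of_linear_system[OF p minor] by blast+
    with t t' ij have "t i = t' i" "t j = t' j" by (intro eq_if_dvd_diff_box; simp)+
    then show "\<forall>k\<in>{i, j}. t k = t' k" by simp
  next
    show "{i, j} \<subseteq> I" "?S \<subseteq> box I p" "0 \<le> p" using ij p by (auto simp: prime_ge_0_int)
  qed
  then show ?thesis using ij by (simp add: numeral_2_eq_2)
qed

definition Q1_polar :: "(nat \<Rightarrow> int) \<Rightarrow> (nat \<Rightarrow> int) \<Rightarrow> (nat \<Rightarrow> int) \<Rightarrow> int" where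
  "Q1_polar c w t = (\<Sum>i\<in>{1..4}. c i * w i * t i)"

lemma Q2_eq_uminus_Q1: "Q2 b y = - Q1 b y"
  by (simp add: Q1_def Q2_def)

lemma mult_Q1_polar_eq_sum: "d * Q1_polar c w t = (\<Sum>i\<in>{1..4}. (d * c i * w i) * t i)"
  by (simp add: Q1_polar_def sum_distrib_left mult.assoc)

lemma Q1_add_mult:
  "Q1 c (\<lambda>i. w i + m * t i) = Q1 c w + 2 * m * Q1_polar c w t + m^2 * Q1 c t"
proof -
  have "c i * (w i + m * t i)^2 = c i * (w i)^2 + 2 * m * (c i * w i * t i) + m^2 * (c i * (t i)^2)" for i
    by (simp add: power2_eq_square algebra_simps)
  then have "Q1 c (\<lambda>i. w i + m * t i)
      = (\<Sum>i\<in>{1..4}. c i * (w i)^2) + (\<Sum>i\<in>{1..4}. 2 * m * (c i * w i * t i))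
        + (\<Sum>i\<in>{1..4}. m^2 * (c i * (t i)^2))"
    unfolding Q1_def by (simp only: sum.distrib)
  then show ?thesis unfolding Q1_def Q1_polar_def by (simp only: sum_distrib_left)
qed

lemma dvd_quotient_add_if_prime_power_dvd:
  fixes p q x y :: int
  assumes p: "p \<noteq> 0" and q: "p ^ s dvd q" and sum: "p ^ Suc s dvd q + p ^ s * x + p ^ Suc s * y"
  shows "p dvd q div p ^ s + x"
proof -
  obtain q' where q': "q = p ^ s * q'" using q ..
  have "q + p ^ s * x + p ^ Suc s * y = p ^ s * (q' + x + p * y)"
    by (simp add: q' algebra_simps)
  with sum have "p ^ s * p dvd p ^ s * (q' + x + p * y)" by (simp only: power_Suc2)
  then have "p dvd q' + x + p * y" using p by (subst (asm) dvd_times_left_cancel_iff) simp_all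
  from dvd_diff[OF this dvd_triv_left[of p y]] have "p dvd q' + x" by simp
  then show ?thesis using q' p by simp
qed

lemma prime_power_dvd_Q1_low_digits:
  fixes p :: int
  assumes "p ^ s dvd Q1 c (\<lambda>i. w i + p ^ k * t i)" "p ^ s dvd p ^ k * 2" "s \<le> 2 * k"
  shows "p ^ s dvd Q1 c w"
proof -
  have "p ^ s dvd (p ^ k) ^ 2"
    using le_imp_power_dvd[OF assms(3), of p] by (simp only: power_mult mult.commute)
  then have "p ^ s dvd Q1 c (\<lambda>i. w i + p ^ k * t i) - (p ^ k * 2) * Q1_polar c w t - (p ^ k) ^ 2 * Q1 c t"
    using assms(1) by (intro dvd_diff dvd_mult2[OF assms(2)] dvd_mult2[OF \<open>p ^ s dvd (p ^ k) ^ 2\<close>])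
  then show ?thesis unfolding Q1_add_mult by (simp add: algebra_simps)
qed

text \<open>Used with \<open>s = k, d = 2\<close> for odd \<open>p\<close> and with \<open>s = k + 1, d = 1\<close> for \<open>p = 2\<close>; in both
  cases the quadratic term \<open>p\<^sup>2\<^sup>k Q\<^sub>1(t)\<close> vanishes modulo \<open>p\<^sup>s\<^sup>+\<^sup>1\<close>.\<close>

lemma prime_dvd_Q1_linearisation:
  fixes p :: int
  assumes p: "p \<noteq> 0" and w: "p ^ s dvd Q1 c w" and v: "p ^ Suc s dvd Q1 c (\<lambda>i. w i + p ^ k * t i)"
    and d: "p ^ k * 2 = p ^ s * d" and s: "s < 2 * k"
  shows "p dvd Q1 c w div p ^ s + d * Q1_polar c w t"
proof (rule dvd_quotient_add_if_prime_power_dvd[OF p w])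
  have "Suc s + (2 * k - Suc s) = k * 2" using s by simp
  then have "(p ^ k) ^ 2 = p ^ (Suc s + (2 * k - Suc s))" by (simp only: power_mult)
  then have "(p ^ k) ^ 2 * Q1 c t = p ^ Suc s * (p ^ (2 * k - Suc s) * Q1 c t)"
    by (simp only: power_add mult.assoc)
  moreover have "2 * p ^ k * Q1_polar c w t = p ^ s * (d * Q1_polar c w t)"
    using d by (metis mult.assoc mult.commute)
  ultimately have "Q1 c (\<lambda>i. w i + p ^ k * t i)
      = Q1 c w + p ^ s * (d * Q1_polar c w t) + p ^ Suc s * (p ^ (2 * k - Suc s) * Q1 c t)"
    by (simp only: Q1_add_mult)
  with v show "p ^ Suc s dvd Q1 c w + p ^ s * (d * Q1_polar c w t) + p ^ Suc s * (p ^ (2 * k - Suc s) * Q1 c t)"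
    by simp
qed

text \<open>Residues modulo \<open>p\<^sup>k\<close> of the lifts of \<open>u\<close> solving the system modulo \<open>p\<^sup>s\<close>; the case
  \<open>s = k + 1\<close> is needed for \<open>p = 2\<close>.\<close>

definition lift_set :: "(nat \<Rightarrow> int) \<Rightarrow> (nat \<Rightarrow> int) \<Rightarrow> int \<Rightarrow> nat \<Rightarrow> (nat \<Rightarrow> int) \<Rightarrow> nat \<Rightarrow> nat
    \<Rightarrow> (nat \<Rightarrow> int) set" where
  "lift_set a b p e u k s = {v \<in> box {1..4} (p ^ k). p ^ s dvd Q1 a v \<and> p ^ s dvd Q1 b v
      \<and> (\<forall>i\<in>{1..4}. [v i = u i] (mod p ^ e))}"

lemma lifts_eq_lift_set: "lifts a b p e f u = lift_set a b p e u f f"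
  unfolding lifts_def lift_set_def box_def by (simp add: cong_0_iff Q2_eq_uminus_Q1)

lemma finite_lift_set: "finite (lift_set a b p e u k s)"
  by (rule finite_subset[of _ "box {1..4} (p ^ k)"]) (auto simp: lift_set_def finite_box)

lemma card_lift_set_base_le:
  fixes p :: int
  shows "card (lift_set a b p e u e s) \<le> 1"
proof -
  have "v = v'" if "v \<in> lift_set a b p e u e s" "v' \<in> lift_set a b p e u e s" for v v'
  proof
    fix i
    from that have v: "v \<in> box {1..4} (p ^ e)" "\<forall>i\<in>{1..4}. [v i = u i] (mod p ^ e)"
      and v': "v' \<in> box {1..4} (p ^ e)" "\<forall>i\<in>{1..4}. [v' i = u i] (mod p ^ e)"
      unfolding lift_set_def by auto
    show "v i = v' i"
    proof (cases "i \<in> {1..4}")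
      case True
      with v(2) v'(2) have "[v i = v' i] (mod p ^ e)" by (meson cong_sym cong_trans)
      with True v(1) v'(1) show ?thesis unfolding box_def by (intro cong_less_imp_eq_int) auto
    next
      case False
      with v(1) v'(1) show ?thesis unfolding box_def by auto
    qed
  qed
  then show ?thesis by (simp add: card_le_Suc0_iff_eq[OF finite_lift_set])
qed

lemma not_dvd_lift_set_component:
  fixes p :: int
  assumes w: "w \<in> lift_set a b p e u k s" and e: "1 \<le> e" and i: "i \<in> {1..4}" "\<not> p dvd u i"
  shows "\<not> p dvd w i"
proof -
  have "[w i = u i] (mod p ^ e)" using w i unfolding lift_set_def by auto
  moreover have "p dvd p ^ e" using e by (simp add: dvd_power)
  ultimately have "[w i = u i] (mod p)" by (rule cong_dvd_modulus)
  then show ?thesis using i cong_dvd_iff by blast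
qed

lemma lift_set_Suc_digits:
  fixes p :: int
  assumes v: "v \<in> lift_set a b p e u (Suc k) s'" and p: "p > 1" and ek: "e \<le> k"
    and s: "s \<le> s'" "p ^ s dvd p ^ k * 2" "s \<le> 2 * k"
  shows "(\<lambda>i. v i mod p ^ k) \<in> lift_set a b p e u k s" and "(\<lambda>i. v i div p ^ k) \<in> box {1..4} p"
proof -
  let ?w = "\<lambda>i. v i mod p ^ k" and ?t = "\<lambda>i. v i div p ^ k"
  have v_eq: "v = (\<lambda>i. ?w i + p ^ k * ?t i)" by (simp add: mult_div_mod_eq add.commute)
  have box: "v \<in> box {1..4} (p ^ Suc k)" and Q: "p ^ s' dvd Q1 a v" "p ^ s' dvd Q1 b v"
    and cong: "\<forall>i\<in>{1..4}. [v i = u i] (mod p ^ e)"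
    using v unfolding lift_set_def by auto
  have "p ^ s dvd p ^ s'" using s by (simp add: le_imp_power_dvd)
  have "p ^ s dvd Q1 c ?w" if "p ^ s' dvd Q1 c v" for c
  proof -
    have "p ^ s dvd Q1 c (\<lambda>i. ?w i + p ^ k * ?t i)"
      unfolding v_eq[symmetric] using \<open>p ^ s dvd p ^ s'\<close> that by (rule dvd_trans)
    then show ?thesis using s(2,3) by (rule prime_power_dvd_Q1_low_digits)
  qed
  moreover have "[?w i = u i] (mod p ^ e)" if "i \<in> {1..4}" for i
    using cong that ek by (simp add: cong_def le_imp_power_dvd mod_mod_cancel)
  moreover have "?w \<in> box {1..4} (p ^ k)" using box p unfolding box_def by auto
  ultimately show "?w \<in> lift_set a b p e u k s" using Q unfolding lift_set_def by blast
  have "v i div p ^ k < p" if "v i < p ^ Suc k" for i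
  proof -
    have "p ^ k * (v i div p ^ k) = v i - v i mod p ^ k" by (simp add: minus_mod_eq_mult_div)
    also have "\<dots> < p ^ k * p"
    proof -
      have "0 \<le> v i mod p ^ k" using p by simp
      then show ?thesis using that by (simp add: mult.commute)
    qed
    finally show ?thesis using p by simp
  qed
  then show "?t \<in> box {1..4} p" using box p unfolding box_def by (auto simp: pos_imp_zdiv_nonneg_iff)
qed

lemma card_le_mult_card_if_fibres_le:
  assumes B: "finite B" and g: "g ` A \<subseteq> B" and fibres: "\<And>y. y \<in> B \<Longrightarrow> int (card {x \<in> A. g x = y}) \<le> c"
  shows "int (card A) \<le> c * int (card B)"
proof -
  have "A = (\<Union>y\<in>B. {x \<in> A. g x = y})" using g by auto
  then have "card A \<le> (\<Sum>y\<in>B. card {x \<in> A. g x = y})" by (metis card_UN_le B)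
  then have "int (card A) \<le> (\<Sum>y\<in>B. int (card {x \<in> A. g x = y}))" by (metis of_nat_le_iff of_nat_sum)
  also have "\<dots> \<le> (\<Sum>y\<in>B. c)" by (rule sum_mono) (rule fibres)
  finally show ?thesis by (simp add: mult.commute)
qed

lemma card_lift_set_Suc_le:
  fixes p c :: int
  assumes p: "p > 1" and ek: "e \<le> k" and s: "s \<le> s'" "p ^ s dvd p ^ k * 2" "s \<le> 2 * k"
    and T: "\<And>w. finite (T w)"
    and digits: "\<And>v. v \<in> lift_set a b p e u (Suc k) s' \<Longrightarrow> (\<lambda>i. v i div p ^ k) \<in> T (\<lambda>i. v i mod p ^ k)"
    and card_T: "\<And>w. w \<in> lift_set a b p e u k s \<Longrightarrow> int (card (T w)) \<le> c"
  shows "int (card (lift_set a b p e u (Suc k) s')) \<le> c * int (card (lift_set a b p e u k s))"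
proof (rule card_le_mult_card_if_fibres_le[OF finite_lift_set])
  show "(\<lambda>v i. v i mod p ^ k) ` lift_set a b p e u (Suc k) s' \<subseteq> lift_set a b p e u k s"
    using lift_set_Suc_digits(1)[OF _ p ek s] by blast
next
  fix w assume w: "w \<in> lift_set a b p e u k s"
  let ?F = "{v \<in> lift_set a b p e u (Suc k) s'. (\<lambda>i. v i mod p ^ k) = w}"
  have "inj_on (\<lambda>v i. v i div p ^ k) ?F"
  proof (rule inj_onI)
    fix v v' assume "v \<in> ?F" "v' \<in> ?F" and div: "(\<lambda>i. v i div p ^ k) = (\<lambda>i. v' i div p ^ k)"
    then have mod: "(\<lambda>i. v i mod p ^ k) = (\<lambda>i. v' i mod p ^ k)" by simp
    show "v = v'"
    proof
      fix i
      have "v i mod p ^ k = v' i mod p ^ k" "v i div p ^ k = v' i div p ^ k"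
        using fun_cong[OF mod, of i] fun_cong[OF div, of i] by simp_all
      then show "v i = v' i" by (metis mult_div_mod_eq)
    qed
  qed
  then have "card ?F \<le> card (T w)"
    using digits T by (intro card_inj_on_le) auto
  then show "int (card ?F) \<le> c" using card_T[OF w] by linarith
qed

text \<open>The digit vectors \<open>t\<close> for which \<open>w + p\<^sup>k t\<close> solves the system modulo \<open>p\<^sup>s\<^sup>+\<^sup>1\<close>, where
  \<open>p\<^sup>k \<sqdot> 2 = p\<^sup>s \<sqdot> d\<close>.\<close>

definition hensel_digits :: "(nat \<Rightarrow> int) \<Rightarrow> (nat \<Rightarrow> int) \<Rightarrow> int \<Rightarrow> nat \<Rightarrow> int \<Rightarrow> (nat \<Rightarrow> int)
    \<Rightarrow> (nat \<Rightarrow> int) set" where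
  "hensel_digits a b p s d w = {t \<in> box {1..4} p. p dvd Q1 a w div p ^ s + d * Q1_polar a w t
      \<and> p dvd Q1 b w div p ^ s + d * Q1_polar b w t}"

lemma card_lift_set_Suc_le_hensel:
  fixes p c :: int
  assumes p: "p > 1" and ek: "e \<le> k" and d: "p ^ k * 2 = p ^ s * d" and s: "s < 2 * k"
    and card_digits: "\<And>w. w \<in> lift_set a b p e u k s \<Longrightarrow> int (card (hensel_digits a b p s d w)) \<le> c"
  shows "int (card (lift_set a b p e u (Suc k) (Suc s))) \<le> c * int (card (lift_set a b p e u k s))"
proof (rule card_lift_set_Suc_le[OF p ek _ _ _ _ _ card_digits])
  show "p ^ s dvd p ^ k * 2" using d by simp
  show "finite (hensel_digits a b p s d w)" for w by (simp add: hensel_digits_def finite_box)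
next
  fix v assume v: "v \<in> lift_set a b p e u (Suc k) (Suc s)"
  let ?w = "\<lambda>i. v i mod p ^ k" and ?t = "\<lambda>i. v i div p ^ k"
  have v_eq: "v = (\<lambda>i. ?w i + p ^ k * ?t i)" by (simp add: mult_div_mod_eq add.commute)
  have w: "?w \<in> lift_set a b p e u k s" and t: "?t \<in> box {1..4} p"
    using lift_set_Suc_digits[OF v p ek _ _ _, of s] d s by auto
  have "p dvd Q1 c ?w div p ^ s + d * Q1_polar c ?w ?t"
    if "p ^ s dvd Q1 c ?w" "p ^ Suc s dvd Q1 c v" for c
    using prime_dvd_Q1_linearisation[of p s c ?w k ?t d] that p d s unfolding v_eq[symmetric] by simp
  then show "?t \<in> hensel_digits a b p s d ?w"
    using v w t unfolding hensel_digits_def lift_set_def by blast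
qed (use s in auto)

lemma card_hensel_digits_le_cube:
  fixes p d :: int
  assumes p: "prime p" and d: "\<not> p dvd d" and i: "i \<in> {1..4}" and w: "\<not> p dvd w i"
    and ab: "\<not> (p dvd a i \<and> p dvd b i)"
  shows "int (card (hensel_digits a b p s d w)) \<le> p ^ 3"
proof -
  obtain c where c: "c = a \<or> c = b" and ci: "\<not> p dvd c i" using ab by blast
  have "hensel_digits a b p s d w \<subseteq>
      {t \<in> box {1..4} p. p dvd Q1 c w div p ^ s + (\<Sum>k\<in>{1..4}. (d * c k * w k) * t k)}"
    using c unfolding hensel_digits_def mult_Q1_polar_eq_sum by blast
  then have "card (hensel_digits a b p s d w)
      \<le> card {t \<in> box {1..4} p. p dvd Q1 c w div p ^ s + (\<Sum>k\<in>{1..4}. (d * c k * w k) * t k)}"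
    by (intro card_mono) (simp_all add: finite_box)
  moreover have "\<not> p dvd d * c i * w i" using p d ci w by (simp add: prime_dvd_mult_iff)
  then have "int (card {t \<in> box {1..4} p. p dvd Q1 c w div p ^ s + (\<Sum>k\<in>{1..4}. (d * c k * w k) * t k)})
      \<le> p ^ (card {1..4::nat} - 1)"
    by (intro card_box_linear_congruence_le[OF p _ i]) simp
  ultimately show ?thesis by simp
qed

lemma card_hensel_digits_le_square:
  fixes p d :: int
  assumes p: "prime p" and d: "\<not> p dvd d" and ij: "i \<in> {1..4}" "j \<in> {1..4}" "i \<noteq> j"
    and w: "\<not> p dvd w i" "\<not> p dvd w j" and minor: "\<not> p dvd a i * b j - a j * b i"
  shows "int (card (hensel_digits a b p s d w)) \<le> p ^ 2"
proof -
  have "(d * a i * w i) * (d * b j * w j) - (d * a j * w j) * (d * b i * w i)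
      = d * d * w i * w j * (a i * b j - a j * b i)"
    by (simp add: algebra_simps)
  then have "\<not> p dvd (d * a i * w i) * (d * b j * w j) - (d * a j * w j) * (d * b i * w i)"
    using p d w minor by (simp add: prime_dvd_mult_iff)
  from card_box_linear_congruences_le[OF p _ ij this]
  show ?thesis unfolding hensel_digits_def mult_Q1_polar_eq_sum by simp
qed

lemma le_power_mult_if_step_le:
  fixes g :: "nat \<Rightarrow> int" and c :: int
  assumes c: "0 \<le> c" and step: "\<And>k. m \<le> k \<Longrightarrow> g (Suc k) \<le> c * g k"
  shows "g (m + j) \<le> c ^ j * g m"
proof (induction j)
  case (Suc j)
  have "g (m + Suc j) \<le> c * g (m + j)" using step[of "m + j"] by simp
  also have "\<dots> \<le> c * (c ^ j * g m)" using Suc.IH c by (rule mult_left_mono)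
  finally show ?case by (simp add: mult.assoc)
qed simp

lemma card_lifts_le_power_if_step_le:
  fixes p c :: int
  assumes c: "0 \<le> c" and ef: "e \<le> f"
    and step: "\<And>k. e \<le> k \<Longrightarrow>
      int (card (lift_set a b p e u (Suc k) (Suc k))) \<le> c * int (card (lift_set a b p e u k k))"
  shows "int (card (lifts a b p e f u)) \<le> c ^ (f - e)"
proof -
  have "int (card (lift_set a b p e u (e + (f - e)) (e + (f - e))))
      \<le> c ^ (f - e) * int (card (lift_set a b p e u e e))"
    using le_power_mult_if_step_le[OF c, of e "\<lambda>k. int (card (lift_set a b p e u k k))"] step by blast
  also have "\<dots> \<le> c ^ (f - e)"
    using card_lift_set_base_le[where p = p and a = a and b = b and e = e and u = u and s = e] c by (simp add: mult_left_le)
  finally show ?thesis using ef by (simp add: lifts_eq_lift_set)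
qed

lemma card_lifts_le_odd_cube:
  fixes p :: int
  assumes p: "prime p" "p \<noteq> 2" and e: "1 \<le> e" "e \<le> f"
    and i: "i \<in> {1..4}" "\<not> p dvd u i" and ab: "\<not> (p dvd a i \<and> p dvd b i)"
  shows "int (card (lifts a b p e f u)) \<le> p ^ (3 * (f - e))"
proof -
  have p1: "p > 1" using p by (simp add: prime_gt_1_int)
  have two: "\<not> p dvd 2" using p primes_dvd_imp_eq[of p 2] by auto
  show ?thesis unfolding power_mult
  proof (rule card_lifts_le_power_if_step_le[OF _ e(2)])
    fix k assume k: "e \<le> k"
    show "int (card (lift_set a b p e u (Suc k) (Suc k))) \<le> p ^ 3 * int (card (lift_set a b p e u k k))"
    proof (rule card_lift_set_Suc_le_hensel[OF p1 k refl])
      fix w assume "w \<in> lift_set a b p e u k k"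
      then have "\<not> p dvd w i" using not_dvd_lift_set_component e(1) i by blast
      then show "int (card (hensel_digits a b p k 2 w)) \<le> p ^ 3"
        using p(1) two i(1) ab by (intro card_hensel_digits_le_cube)
    qed (use e k in auto)
  qed (use p1 in simp)
qed

lemma card_lifts_le_odd_square:
  fixes p :: int
  assumes p: "prime p" "p \<noteq> 2" and e: "1 \<le> e" "e \<le> f"
    and ij: "i \<in> {1..4}" "j \<in> {1..4}" "i \<noteq> j" and u: "\<not> p dvd u i" "\<not> p dvd u j"
    and minor: "\<not> p dvd a i * b j - a j * b i"
  shows "int (card (lifts a b p e f u)) \<le> p ^ (2 * (f - e))"
proof -
  have p1: "p > 1" using p by (simp add: prime_gt_1_int)
  have two: "\<not> p dvd 2" using p primes_dvd_imp_eq[of p 2] by auto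
  show ?thesis unfolding power_mult
  proof (rule card_lifts_le_power_if_step_le[OF _ e(2)])
    fix k assume k: "e \<le> k"
    show "int (card (lift_set a b p e u (Suc k) (Suc k))) \<le> p ^ 2 * int (card (lift_set a b p e u k k))"
    proof (rule card_lift_set_Suc_le_hensel[OF p1 k refl])
      fix w assume "w \<in> lift_set a b p e u k k"
      then have "\<not> p dvd w i" "\<not> p dvd w j" using not_dvd_lift_set_component e(1) ij u by blast+
      then show "int (card (hensel_digits a b p k 2 w)) \<le> p ^ 2"
        using p(1) two ij minor by (intro card_hensel_digits_le_square)
    qed (use e k in auto)
  qed (use p1 in simp)
qed

lemma card_lift_set_two_Suc_le:
  assumes k: "1 \<le> k" "e \<le> k" and s': "Suc k \<le> s'"
  shows "int (card (lift_set a b 2 e u (Suc k) s')) \<le> 16 * int (card (lift_set a b 2 e u k (Suc k)))"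
proof (rule card_lift_set_Suc_le[where T = "\<lambda>_. box {1..4} 2"])
  have "int (card (box {1..4::nat} (2::int))) \<le> 2 ^ card {1..4::nat}" by (rule card_box_le) simp_all
  then show "int (card (box {1..4::nat} (2::int))) \<le> 16" by simp
next
  fix v assume "v \<in> lift_set a b 2 e u (Suc k) s'"
  then show "(\<lambda>i. v i div 2 ^ k) \<in> box {1..4} 2"
    using k s' by (intro lift_set_Suc_digits(2)[where s = "Suc k" and e = e]) auto
qed (use k s' in \<open>auto simp: finite_box\<close>)

lemma card_lift_set_two_le:
  assumes e: "1 \<le> e" "e \<le> m" and i: "i \<in> {1..4}" "\<not> 2 dvd u i" and ab: "\<not> (2 dvd a i \<and> 2 dvd b i)"
  shows "int (card (lift_set a b 2 e u m (Suc m))) \<le> 2 * 8 ^ (m - e)"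
proof (cases "m = e")
  case True
  then show ?thesis using card_lift_set_base_le[where p = 2 and a = a and b = b and e = e and u = u and s = "Suc e"] by simp
next
  case False
  let ?g = "\<lambda>k. int (card (lift_set a b 2 e u k (Suc k)))"
  have "?g (Suc k) \<le> 8 * ?g k" if k: "Suc e \<le> k" for k
  proof (rule card_lift_set_Suc_le_hensel[where d = 1])
    fix w assume "w \<in> lift_set a b 2 e u k (Suc k)"
    then have "\<not> 2 dvd w i" using not_dvd_lift_set_component e(1) i by blast
    then show "int (card (hensel_digits a b 2 (Suc k) 1 w)) \<le> 8"
      using card_hensel_digits_le_cube[of 2 1 i w a b] i ab by simp
  qed (use e k in auto)
  then have "?g (Suc e + (m - Suc e)) \<le> 8 ^ (m - Suc e) * ?g (Suc e)"
    by (intro le_power_mult_if_step_le) simp_all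
  also have "?g (Suc e) \<le> 16"
    using card_lift_set_two_Suc_le[where k = e and e = e and s' = "Suc (Suc e)" and a = a and b = b and u = u]
      card_lift_set_base_le[where p = 2 and a = a and b = b and e = e and u = u and s = "Suc e"] e by simp
  then have "8 ^ (m - Suc e) * ?g (Suc e) \<le> 8 ^ (m - Suc e) * 16" by simp
  also have "\<dots> = 2 * 8 ^ (m - e)"
    using e False by (simp add: Suc_diff_Suc power_Suc[symmetric] less_le)
  finally show ?thesis using e False by simp
qed

lemma card_lifts_le_two:
  assumes e: "1 \<le> e" "e < f" and i: "i \<in> {1..4}" "\<not> 2 dvd u i" and ab: "\<not> (2 dvd a i \<and> 2 dvd b i)"
  shows "int (card (lifts a b 2 e f u)) \<le> 2 ^ (2 + 3 * (f - e))"
proof -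
  obtain m where f: "f = Suc m" and m: "e \<le> m" using e by (metis less_eq_Suc_le Suc_le_D Suc_le_mono)
  have "int (card (lift_set a b 2 e u (Suc m) (Suc m))) \<le> 16 * int (card (lift_set a b 2 e u m (Suc m)))"
    using card_lift_set_two_Suc_le[of m e "Suc m"] e m by simp
  also have "\<dots> \<le> 16 * (2 * 8 ^ (m - e))"
    using card_lift_set_two_le[where i = i and u = u] e(1) m i ab by simp
  also have "\<dots> = 2 ^ (2 + 3 * (f - e))"
    using m by (simp add: f Suc_diff_le power_add power_mult)
  finally show ?thesis by (simp add: f lifts_eq_lift_set)
qed

lemma finite_bad_primes:
  assumes nonprop: "\<forall>i\<in>{1..4}. \<forall>j\<in>{1..4}. i \<noteq> j \<longrightarrow> a i * b j - a j * b i \<noteq> 0"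
  shows "finite (bad_primes a b)"
proof -
  let ?pairs = "{(i, j). i \<in> {1..4::nat} \<and> j \<in> {1..4::nat} \<and> i \<noteq> j}"
  let ?N = "2 * (\<Prod>(i, j)\<in>?pairs. a i * b j - a j * b i)"
  have pairs: "finite ?pairs" by (rule finite_subset[of _ "{1..4} \<times> {1..4}"]) auto
  then have "?N \<noteq> 0" using nonprop by auto
  moreover have "bad_primes a b \<subseteq> {d. d dvd ?N}"
  proof
    fix q assume "q \<in> bad_primes a b"
    then consider "q = 2" | i j where "(i, j) \<in> ?pairs" "q dvd a i * b j - a j * b i"
      unfolding bad_primes_def by blast
    then show "q \<in> {d. d dvd ?N}"
    proof cases
      case (2 i j)
      then have "q dvd (\<Prod>(i, j)\<in>?pairs. a i * b j - a j * b i)"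
        using dvd_prodI[OF pairs, of "(i, j)" "\<lambda>(i, j). a i * b j - a j * b i"] dvd_trans by auto
      then show ?thesis by simp
    qed simp
  qed
  ultimately show ?thesis using finite_subset finite_divisors_int by blast
qed

lemma prime_dvd_Delta:
  assumes nonprop: "\<forall>i\<in>{1..4}. \<forall>j\<in>{1..4}. i \<noteq> j \<longrightarrow> a i * b j - a j * b i \<noteq> 0"
    and p: "prime p"
    and bad: "p = 2 \<or> (\<exists>i\<in>{1..4}. \<exists>j\<in>{1..4}. i \<noteq> j \<and> p dvd a i * b j - a j * b i)"
  shows "p dvd Delta a b"
proof -
  have "p \<in> bad_primes a b" using p bad unfolding bad_primes_def by (simp only: mem_Collect_eq)
  then show ?thesis unfolding Delta_def by (rule dvd_prodI[OF finite_bad_primes[OF nonprop]])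
qed

lemma exists_other_nondvd_component:
  fixes p :: int
  assumes p: "prime p" and i: "i \<in> {1..4}" "\<not> p dvd u i" and ab: "\<not> (p dvd a i \<and> p dvd b i)"
    and Q: "p dvd Q1 a u" "p dvd Q1 b u"
  shows "\<exists>j\<in>{1..4}. i \<noteq> j \<and> \<not> p dvd u j"
proof (rule ccontr)
  assume "\<not> ?thesis"
  then have others: "p dvd (\<Sum>j\<in>{1..4} - {i}. c j * (u j)^2)" for c
    by (intro dvd_sum) (auto simp: power2_eq_square)
  have "p dvd c i * (u i)^2" if "p dvd Q1 c u" for c
    using dvd_diff[OF that others[of c]] i by (simp add: Q1_def sum.remove)
  then have "p dvd a i" "p dvd b i" using Q p i by (simp_all add: prime_dvd_mult_iff prime_dvd_power_iff)
  then show False using ab by blast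
qed

theorem lemma3p3:
  fixes a b :: "nat \<Rightarrow> int" and p :: int and e f :: nat and u :: "nat \<Rightarrow> int"
  assumes coprime_ab: "\<forall>i\<in>{1..4}. gcd (a i) (b i) = 1"
    and nonprop: "\<forall>i\<in>{1..4}. \<forall>j\<in>{1..4}. i \<noteq> j \<longrightarrow> a i * b j - a j * b i \<noteq> 0"
    and p: "prime p"
    and e: "e \<ge> 1"
    and u_prim: "\<exists>i\<in>{1..4}. \<not> p dvd u i"
    and u_Q1: "[Q1 a u = 0] (mod p ^ e)"
    and u_Q2: "[Q2 b u = 0] (mod p ^ e)"
    and f: "f > e"
  shows "(\<not> p dvd Delta a b \<longrightarrow> int (card (lifts a b p e f u)) \<le> p ^ (2 * (f - e)))
       \<and> (p dvd Delta a b \<longrightarrow> int (card (lifts a b p e f u)) \<le> p ^ (2 * nu p + 3 * (f - e)))"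
proof -
  obtain i where i: "i \<in> {1..4}" "\<not> p dvd u i" using u_prim by blast
  have ab: "\<not> (p dvd a i \<and> p dvd b i)"
    using coprime_ab i p by (metis gcd_greatest_iff not_prime_unit is_unit_gcd)
  show ?thesis
  proof (cases "p = 2")
    case True
    then have "p dvd Delta a b" using prime_dvd_Delta[OF nonprop p] by blast
    moreover from i ab have "int (card (lifts a b 2 e f u)) \<le> 2 ^ (2 + 3 * (f - e))"
      unfolding True by (rule card_lifts_le_two[OF e f])
    ultimately show ?thesis using True by (simp add: nu_def)
  next
    case False
    have "int (card (lifts a b p e f u)) \<le> p ^ (2 * nu p + 3 * (f - e))"
      using card_lifts_le_odd_cube[where a = a and b = b and u = u, OF p False e less_imp_le[OF f] i ab]
      by (simp add: nu_def False)
    moreover have "int (card (lifts a b p e f u)) \<le> p ^ (2 * (f - e))" if "\<not> p dvd Delta a b"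
    proof -
      have "p dvd p ^ e" using e by (simp add: dvd_power)
      then have "p dvd Q1 a u" "p dvd Q1 b u"
        using u_Q1 u_Q2 by (auto simp: cong_0_iff Q2_eq_uminus_Q1 intro: dvd_trans)
      then obtain j where j: "j \<in> {1..4}" "i \<noteq> j" "\<not> p dvd u j"
        using exists_other_nondvd_component[where a = a and b = b and u = u, OF p i ab] by blast
      have "\<not> p dvd a i * b j - a j * b i"
        using prime_dvd_Delta[OF nonprop p] that i(1) j(1,2) by blast
      then show ?thesis
        using card_lifts_le_odd_square[where a = a and b = b and u = u, OF p False e less_imp_le[OF f]]
          i j by blast
    qed
    ultimately show ?thesis by blast
  qed
qed

end
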